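(* Let $X,Y$ be countable discrete metric spaces and $d\in D(X,Y)$. Suppose $M_d(X,Y)$ is full as a Hilbert $C^*_u(X)$-module, i.e. the linear span of $\{T^*\circ S: T,S\in M_d(X,Y)\}$ is norm dense in $C^*_u(X)$. Then there exist $L>0$ and a map $f:X\to Y$ such that $d(x,f(x))\le L$ for all $x\in X$.
   Context: $H_X=l^2(X)$ with basis $\{\delta_x\}$. $D(X,Y)$ is the set of metrics on $X\sqcup Y$ restricting to $d_X$ and $d_Y$. For $T:H_X\to H_Y$ bounded, $T_{yx}=\langle T\delta_x,\delta_y\rangle$; $T$ has propagation less than $L$ w.r.t. $d$ if $T_{yx}=0$ whenever $d(x,y)\ge L$. $M_d(X,Y)$ is the norm closure of the bounded finite-propagation operators $H_X\to H_Y$. $C^*_u(X)$ is the norm closure of the bounded operators on $H_X$ of finite propagation w.r.t. $d_X$ (uniform Roe algebra). *)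

theory Defs
  imports "HOL-Analysis.Analysis" "HOL-Library.Countable"
begin

definition is_metric :: "('a \<Rightarrow> 'a \<Rightarrow> real) \<Rightarrow> bool" where
  "is_metric d \<longleftrightarrow>
     (\<forall>x y. 0 \<le> d x y) \<and> (\<forall>x y. d x y = 0 \<longleftrightarrow> x = y) \<and>
     (\<forall>x y. d x y = d y x) \<and> (\<forall>x y z. d x z \<le> d x y + d y z)"

definition is_discrete_metric :: "('a \<Rightarrow> 'a \<Rightarrow> real) \<Rightarrow> bool" where
  "is_discrete_metric d \<longleftrightarrow> is_metric d \<and>
     (\<forall>x. \<exists>e>0. \<forall>y. d x y < e \<longrightarrow> y = x)"

text \<open>The set D(X,Y) of metrics on the disjoint union restricting to dX and dY.\<close>
definition coarse_metrics ::
  "('a \<Rightarrow> 'a \<Rightarrow> real) \<Rightarrow> ('b \<Rightarrow> 'b \<Rightarrow> real) \<Rightarrow> (('a + 'b) \<Rightarrow> ('a + 'b) \<Rightarrow> real) set" where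
  "coarse_metrics dX dY = {d. is_metric d \<and>
     (\<forall>x x'. d (Inl x) (Inl x') = dX x x') \<and> (\<forall>y y'. d (Inr y) (Inr y') = dY y y')}"

definition is_l2 :: "('a \<Rightarrow> complex) \<Rightarrow> bool" where
  "is_l2 v \<longleftrightarrow> (\<lambda>x. (cmod (v x))\<^sup>2) summable_on UNIV"

definition l2norm :: "('a \<Rightarrow> complex) \<Rightarrow> real" where
  "l2norm v = sqrt (\<Sum>\<^sub>\<infinity>x. (cmod (v x))\<^sup>2)"

text \<open>An operator H_X \<rightarrow> H_Y is represented by its matrix T y x = <T delta_x, delta_y>.\<close>
definition mat_apply :: "('b \<Rightarrow> 'a \<Rightarrow> complex) \<Rightarrow> ('a \<Rightarrow> complex) \<Rightarrow> ('b \<Rightarrow> complex)" where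
  "mat_apply T v = (\<lambda>y. \<Sum>\<^sub>\<infinity>x. T y x * v x)"

definition bounded_mat :: "('b \<Rightarrow> 'a \<Rightarrow> complex) \<Rightarrow> bool" where
  "bounded_mat T \<longleftrightarrow> (\<exists>C. \<forall>v. is_l2 v \<longrightarrow>
      (\<forall>y. (\<lambda>x. T y x * v x) summable_on UNIV) \<and>
      is_l2 (mat_apply T v) \<and> l2norm (mat_apply T v) \<le> C * l2norm v)"

definition opnorm :: "('b \<Rightarrow> 'a \<Rightarrow> complex) \<Rightarrow> real" where
  "opnorm T = Sup {l2norm (mat_apply T v) | v. is_l2 v \<and> l2norm v \<le> 1}"

definition mat_diff :: "('b \<Rightarrow> 'a \<Rightarrow> complex) \<Rightarrow> ('b \<Rightarrow> 'a \<Rightarrow> complex) \<Rightarrow> ('b \<Rightarrow> 'a \<Rightarrow> complex)" where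
  "mat_diff T S = (\<lambda>y x. T y x - S y x)"

definition finite_prop :: "('a \<Rightarrow> 'b \<Rightarrow> real) \<Rightarrow> ('b \<Rightarrow> 'a \<Rightarrow> complex) \<Rightarrow> bool" where
  "finite_prop \<rho> T \<longleftrightarrow> (\<exists>L. \<forall>x y. \<rho> x y \<ge> L \<longrightarrow> T y x = 0)"

definition roe_closure :: "('a \<Rightarrow> 'b \<Rightarrow> real) \<Rightarrow> ('b \<Rightarrow> 'a \<Rightarrow> complex) set" where
  "roe_closure \<rho> = {T. bounded_mat T \<and>
      (\<forall>e>0. \<exists>S. bounded_mat S \<and> finite_prop \<rho> S \<and> opnorm (mat_diff T S) < e)}"

definition M_d :: "(('a + 'b) \<Rightarrow> ('a + 'b) \<Rightarrow> real) \<Rightarrow> ('b \<Rightarrow> 'a \<Rightarrow> complex) set" where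
  "M_d d = roe_closure (\<lambda>x y. d (Inl x) (Inr y))"

definition uniform_roe :: "('a \<Rightarrow> 'a \<Rightarrow> real) \<Rightarrow> ('a \<Rightarrow> 'a \<Rightarrow> complex) set" where
  "uniform_roe dX = roe_closure dX"

definition adj_comp :: "('b \<Rightarrow> 'a \<Rightarrow> complex) \<Rightarrow> ('b \<Rightarrow> 'a \<Rightarrow> complex) \<Rightarrow> ('a \<Rightarrow> 'a \<Rightarrow> complex)" where
  "adj_comp T S = (\<lambda>x' x. \<Sum>\<^sub>\<infinity>y. cnj (T y x') * S y x)"

definition inner_span :: "('b \<Rightarrow> 'a \<Rightarrow> complex) set \<Rightarrow> ('a \<Rightarrow> 'a \<Rightarrow> complex) set" where
  "inner_span M = {A. \<exists>n::nat. \<exists>c T S. (\<forall>i<n. T i \<in> M \<and> S i \<in> M) \<and>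
      A = (\<lambda>x' x. \<Sum>i<n. c i * adj_comp (T i) (S i) x' x)}"

definition full_module :: "('a \<Rightarrow> 'a \<Rightarrow> real) \<Rightarrow> ('b \<Rightarrow> 'a \<Rightarrow> complex) set \<Rightarrow> bool" where
  "full_module dX M \<longleftrightarrow> (\<forall>A \<in> uniform_roe dX. \<forall>e>0.
      \<exists>B \<in> inner_span M. opnorm (mat_diff A B) < e)"

end

theory Submission
  imports Defs
begin

text \<open>The identity lies in \<open>C\<^sup>*\<^sub>u(X)\<close>, so fullness gives \<open>B = \<Sum> c\<^sub>i T\<^sub>i\<^sup>* S\<^sub>i\<close> with
  \<open>\<parallel>1 - B\<parallel> < 1/2\<close>, and every diagonal entry of \<open>B\<close> has modulus \<open>> 1/2\<close>. Approximating
  each \<open>T\<^sub>i\<close>, \<open>S\<^sub>i\<close> within \<open>\<epsilon>\<close> by operators of propagation \<open>< R\<close>, their columns at any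
  \<open>x\<close> with \<open>d(x, Y) \<ge> R\<close> have norm \<open>< \<epsilon>\<close>, so \<open>|B\<^sub>x\<^sub>x| \<le> \<epsilon>\<^sup>2 \<Sum> |c\<^sub>i|\<close> there.
  Hence no point of \<open>X\<close> is that far from \<open>Y\<close>, and \<open>f\<close> picks a point of \<open>Y\<close> within \<open>R\<close>.\<close>

lemma infsum_if_eq:
  "(\<lambda>x. if x = a then c else 0) summable_on A"
  "a \<in> A \<Longrightarrow> (\<Sum>\<^sub>\<infinity>x\<in>A. if x = a then c else (0::'b::{comm_monoid_add,t2_space})) = c"
proof -
  show "(\<lambda>x. if x = a then c else 0) summable_on A"
    by (subst summable_on_cong_neutral[where T="{a} \<inter> A" and g="\<lambda>x. c"]) auto
  show "a \<in> A \<Longrightarrow> (\<Sum>\<^sub>\<infinity>x\<in>A. if x = a then c else 0) = c"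
    by (subst infsum_cong_neutral[where T="{a}" and g="\<lambda>x. c"]) auto
qed

lemma infsum_finite_sum:
  fixes f :: "'i \<Rightarrow> 'a \<Rightarrow> 'b::{topological_comm_monoid_add, t2_space}"
  assumes "finite F" "\<And>i. i \<in> F \<Longrightarrow> f i summable_on A"
  shows "(\<lambda>y. \<Sum>i\<in>F. f i y) summable_on A \<and> (\<Sum>\<^sub>\<infinity>y\<in>A. \<Sum>i\<in>F. f i y) = (\<Sum>i\<in>F. infsum (f i) A)"
  using assms by (induction F rule: finite_induct) (auto simp: summable_on_add infsum_add)

lemma L2_set_le_l2norm:
  assumes "is_l2 v"
  shows "L2_set (\<lambda>x. cmod (v x)) F \<le> l2norm v"
proof (cases "finite F")
  case True
  have "(\<Sum>x\<in>F. (cmod (v x))\<^sup>2) \<le> (\<Sum>\<^sub>\<infinity>x. (cmod (v x))\<^sup>2)"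
    using assms True unfolding is_l2_def by (intro finite_sum_le_infsum) auto
  then show ?thesis unfolding L2_set_def l2norm_def by simp
next
  case False
  then show ?thesis by (simp add: l2norm_def infsum_nonneg)
qed

lemma is_l2_l2normI:
  assumes "\<And>F. finite F \<Longrightarrow> L2_set (\<lambda>x. cmod (v x)) F \<le> K"
  shows "is_l2 v \<and> l2norm v \<le> K"
proof -
  have K: "0 \<le> K" using assms[of "{}"] by simp
  have sums: "(\<Sum>x\<in>F. (cmod (v x))\<^sup>2) \<le> K\<^sup>2" if "finite F" for F
    using assms[OF that] unfolding L2_set_def by (rule sqrt_le_D)
  have l2: "is_l2 v" unfolding is_l2_def
    by (rule nonneg_bdd_above_summable_on) (use sums in \<open>auto intro!: bdd_aboveI2\<close>)
  have "(\<Sum>\<^sub>\<infinity>x. (cmod (v x))\<^sup>2) \<le> K\<^sup>2"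
    using l2 unfolding is_l2_def by (intro infsum_le_finite_sums) (use sums in auto)
  then have "l2norm v \<le> sqrt (K\<^sup>2)" unfolding l2norm_def by (rule real_sqrt_le_mono)
  with K l2 show ?thesis by simp
qed

lemma l2norm_nonneg: "0 \<le> l2norm v"
  unfolding l2norm_def by (simp add: infsum_nonneg)

lemma norm_le_l2norm: "is_l2 v \<Longrightarrow> cmod (v x) \<le> l2norm v"
  using L2_set_le_l2norm[of v "{x}"] by (simp add: L2_set_def)

lemma l2_inner_summable_and_bound:
  assumes "is_l2 u" "is_l2 v"
  shows "(\<lambda>x. u x * v x) summable_on UNIV"
    and "cmod (\<Sum>\<^sub>\<infinity>x. u x * v x) \<le> l2norm u * l2norm v"
proof -
  have finite_sums: "(\<Sum>x\<in>F. cmod (u x * v x)) \<le> l2norm u * l2norm v" if "finite F" for F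
  proof -
    have "(\<Sum>x\<in>F. cmod (u x * v x)) = (\<Sum>x\<in>F. \<bar>cmod (u x)\<bar> * \<bar>cmod (v x)\<bar>)"
      by (simp add: norm_mult)
    also have "\<dots> \<le> L2_set (\<lambda>x. cmod (u x)) F * L2_set (\<lambda>x. cmod (v x)) F"
      by (rule L2_set_mult_ineq)
    also have "\<dots> \<le> l2norm u * l2norm v"
      using L2_set_le_l2norm[OF assms(1)] L2_set_le_l2norm[OF assms(2)]
      by (intro mult_mono) (auto simp: l2norm_nonneg)
    finally show ?thesis .
  qed
  have abs: "(\<lambda>x. norm (u x * v x)) summable_on UNIV"
    by (rule nonneg_bdd_above_summable_on) (use finite_sums in \<open>auto intro!: bdd_aboveI2\<close>)
  then show "(\<lambda>x. u x * v x) summable_on UNIV" by (rule abs_summable_summable)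
  have "(\<Sum>\<^sub>\<infinity>x. cmod (u x * v x)) \<le> l2norm u * l2norm v"
    using abs by (intro infsum_le_finite_sums) (use finite_sums in auto)
  then show "cmod (\<Sum>\<^sub>\<infinity>x. u x * v x) \<le> l2norm u * l2norm v"
    by (rule order_trans[OF norm_infsum_bound[OF abs]])
qed

lemmas l2_inner_summable = l2_inner_summable_and_bound(1)
lemmas norm_l2_inner_le = l2_inner_summable_and_bound(2)

lemma l2_add:
  assumes "is_l2 u" "is_l2 v"
  shows "is_l2 (\<lambda>x. u x + v x) \<and> l2norm (\<lambda>x. u x + v x) \<le> l2norm u + l2norm v"
proof (rule is_l2_l2normI)
  fix F :: "'a set"
  have "L2_set (\<lambda>x. cmod (u x + v x)) F \<le> L2_set (\<lambda>x. cmod (u x) + cmod (v x)) F"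
    by (rule L2_set_mono) (auto simp: norm_triangle_ineq)
  also have "\<dots> \<le> L2_set (\<lambda>x. cmod (u x)) F + L2_set (\<lambda>x. cmod (v x)) F"
    by (rule L2_set_triangle_ineq)
  also have "\<dots> \<le> l2norm u + l2norm v"
    using L2_set_le_l2norm[OF assms(1)] L2_set_le_l2norm[OF assms(2)] by (rule add_mono)
  finally show "L2_set (\<lambda>x. cmod (u x + v x)) F \<le> l2norm u + l2norm v" .
qed

lemma l2_scale:
  assumes "is_l2 v"
  shows "is_l2 (\<lambda>x. c * v x) \<and> l2norm (\<lambda>x. c * v x) \<le> cmod c * l2norm v"
proof (rule is_l2_l2normI)
  fix F :: "'a set"
  have "L2_set (\<lambda>x. cmod (c * v x)) F = cmod c * L2_set (\<lambda>x. cmod (v x)) F"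
    by (simp add: norm_mult L2_set_right_distrib)
  also have "\<dots> \<le> cmod c * l2norm v"
    using L2_set_le_l2norm[OF assms] by (rule mult_left_mono) simp
  finally show "L2_set (\<lambda>x. cmod (c * v x)) F \<le> cmod c * l2norm v" .
qed

lemma l2_cnj [simp]:
  "is_l2 (\<lambda>x. cnj (v x)) = is_l2 v" "l2norm (\<lambda>x. cnj (v x)) = l2norm v"
  by (simp_all add: is_l2_def l2norm_def)

lemma l2_restrict:
  assumes "is_l2 v"
  shows "is_l2 (\<lambda>x. if x \<in> F then v x else 0) \<and> l2norm (\<lambda>x. if x \<in> F then v x else 0) \<le> l2norm v"
proof (rule is_l2_l2normI)
  fix G :: "'a set"
  have "L2_set (\<lambda>x. cmod (if x \<in> F then v x else 0)) G \<le> L2_set (\<lambda>x. cmod (v x)) G"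
    by (rule L2_set_mono) auto
  then show "L2_set (\<lambda>x. cmod (if x \<in> F then v x else 0)) G \<le> l2norm v"
    using L2_set_le_l2norm[OF assms] by (rule order_trans)
qed

lemma l2_restrict_finite:
  assumes "finite F"
  shows "is_l2 (\<lambda>x. if x \<in> F then u x else 0) \<and>
    l2norm (\<lambda>x. if x \<in> F then u x else 0) \<le> L2_set (\<lambda>x. cmod (u x)) F"
proof (rule is_l2_l2normI)
  fix G :: "'a set" assume G: "finite G"
  have "(\<Sum>x\<in>G. (cmod (if x \<in> F then u x else 0))\<^sup>2) = (\<Sum>x\<in>G \<inter> F. (cmod (u x))\<^sup>2)"
    using G by (intro sum.mono_neutral_cong_right) auto
  also have "\<dots> \<le> (\<Sum>x\<in>F. (cmod (u x))\<^sup>2)"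
    using assms by (intro sum_mono2) auto
  finally show "L2_set (\<lambda>x. cmod (if x \<in> F then u x else 0)) G \<le> L2_set (\<lambda>x. cmod (u x)) F"
    unfolding L2_set_def by (rule real_sqrt_le_mono)
qed

lemma l2_tail_small:
  assumes v: "is_l2 v" and e: "e > 0"
  obtains F where "finite F" "is_l2 (\<lambda>x. if x \<in> F then 0 else v x)"
    "l2norm (\<lambda>x. if x \<in> F then 0 else v x) \<le> e"
proof -
  have sv: "(\<lambda>x. (cmod (v x))\<^sup>2) summable_on UNIV" using v unfolding is_l2_def .
  obtain F where F: "finite F"
    "dist (\<Sum>x\<in>F. (cmod (v x))\<^sup>2) (\<Sum>\<^sub>\<infinity>x. (cmod (v x))\<^sup>2) \<le> e\<^sup>2"
    using infsum_finite_approximation[OF sv, of "e\<^sup>2"] e by auto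
  have "is_l2 (\<lambda>x. if x \<in> F then 0 else v x) \<and> l2norm (\<lambda>x. if x \<in> F then 0 else v x) \<le> e"
  proof (rule is_l2_l2normI)
    fix G :: "'a set" assume G: "finite G"
    have "(\<Sum>x\<in>G. (cmod (if x \<in> F then 0 else v x))\<^sup>2) = (\<Sum>x\<in>G - F. (cmod (v x))\<^sup>2)"
      using G by (intro sum.mono_neutral_cong_right) auto
    also have "\<dots> = (\<Sum>x\<in>(G - F) \<union> F. (cmod (v x))\<^sup>2) - (\<Sum>x\<in>F. (cmod (v x))\<^sup>2)"
      using G F(1) by (subst sum.union_disjoint) auto
    also have "\<dots> \<le> (\<Sum>\<^sub>\<infinity>x. (cmod (v x))\<^sup>2) - (\<Sum>x\<in>F. (cmod (v x))\<^sup>2)"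
      using G F(1) sv by (intro diff_right_mono finite_sum_le_infsum) auto
    also have "\<dots> \<le> e\<^sup>2" using F(2) by (simp add: dist_real_def)
    finally show "L2_set (\<lambda>x. cmod (if x \<in> F then 0 else v x)) G \<le> e"
      unfolding L2_set_def using e by (intro real_le_lsqrt) auto
  qed
  with F(1) that show ?thesis by blast
qed

definition delta :: "'a \<Rightarrow> 'a \<Rightarrow> complex" where
  "delta a = (\<lambda>x. if x = a then 1 else 0)"

lemma l2_delta: "is_l2 (delta a) \<and> l2norm (delta a) \<le> 1"
proof (rule is_l2_l2normI)
  fix F :: "'a set" assume "finite F"
  have "(\<Sum>x\<in>F. (cmod (delta a x))\<^sup>2) = (\<Sum>x\<in>F \<inter> {a}. 1)"
    using \<open>finite F\<close> by (intro sum.mono_neutral_cong_right) (auto simp: delta_def)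
  also have "\<dots> \<le> 1" by (cases "a \<in> F") auto
  finally show "L2_set (\<lambda>x. cmod (delta a x)) F \<le> 1" unfolding L2_set_def by simp
qed

lemma l2_functional_eq_zero:
  fixes \<Phi> :: "('a \<Rightarrow> complex) \<Rightarrow> complex"
  assumes add: "\<And>a b. is_l2 a \<Longrightarrow> is_l2 b \<Longrightarrow> \<Phi> (\<lambda>x. a x + b x) = \<Phi> a + \<Phi> b"
    and bound: "\<And>a. is_l2 a \<Longrightarrow> cmod (\<Phi> a) \<le> K * l2norm a"
    and finitely_supported: "\<And>F. finite F \<Longrightarrow> \<Phi> (\<lambda>x. if x \<in> F then v x else 0) = 0"
    and v: "is_l2 v"
  shows "\<Phi> v = 0"
proof -
  have "cmod (\<Phi> v) \<le> e" if e: "e > 0" for e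
  proof -
    obtain F where F: "finite F" and tail: "is_l2 (\<lambda>x. if x \<in> F then 0 else v x)"
      "l2norm (\<lambda>x. if x \<in> F then 0 else v x) \<le> e / (\<bar>K\<bar> + 1)"
      using l2_tail_small[OF v, of "e / (\<bar>K\<bar> + 1)"] e by auto
    have head: "is_l2 (\<lambda>x. if x \<in> F then v x else 0)" using l2_restrict[OF v] by blast
    have "v = (\<lambda>x. (if x \<in> F then v x else 0) + (if x \<in> F then 0 else v x))" by auto
    then have "\<Phi> v = \<Phi> (\<lambda>x. if x \<in> F then 0 else v x)"
      using add[OF head tail(1)] finitely_supported[OF F] by simp
    also have "cmod \<dots> \<le> \<bar>K\<bar> * (e / (\<bar>K\<bar> + 1))"
      using bound[OF tail(1)] tail(2)
      by (meson abs_ge_self abs_ge_zero l2norm_nonneg mult_mono order_trans)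
    also have "\<dots> \<le> e" using e by (simp add: field_simps)
    finally show ?thesis .
  qed
  then show ?thesis by (metis field_le_epsilon add_0 norm_le_zero_iff)
qed

definition mat_bound :: "('b \<Rightarrow> 'a \<Rightarrow> complex) \<Rightarrow> real \<Rightarrow> bool" where
  "mat_bound T C \<longleftrightarrow> (\<forall>v. is_l2 v \<longrightarrow>
      (\<forall>y. (\<lambda>x. T y x * v x) summable_on UNIV) \<and>
      is_l2 (mat_apply T v) \<and> l2norm (mat_apply T v) \<le> C * l2norm v)"

lemma mat_boundD:
  assumes "mat_bound T C" "is_l2 v"
  shows "(\<lambda>x. T y x * v x) summable_on UNIV" "is_l2 (mat_apply T v)"
    "l2norm (mat_apply T v) \<le> C * l2norm v"
  using assms unfolding mat_bound_def by auto

lemma bounded_mat_iff_mat_bound: "bounded_mat T \<longleftrightarrow> (\<exists>C. mat_bound T C)"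
  unfolding bounded_mat_def mat_bound_def ..

lemma bounded_matE:
  fixes T :: "'b \<Rightarrow> 'a \<Rightarrow> complex"
  assumes "bounded_mat T"
  obtains C where "C \<ge> 0" "mat_bound T C"
proof -
  obtain C where C: "mat_bound T C" using assms bounded_mat_iff_mat_bound by blast
  have "mat_bound T (max C 0)" unfolding mat_bound_def
  proof (intro allI impI)
    fix v :: "'a \<Rightarrow> complex" assume v: "is_l2 v"
    have "C * l2norm v \<le> max C 0 * l2norm v" by (intro mult_right_mono) (auto simp: l2norm_nonneg)
    with mat_boundD[OF C v] show "(\<forall>y. (\<lambda>x. T y x * v x) summable_on UNIV) \<and>
      is_l2 (mat_apply T v) \<and> l2norm (mat_apply T v) \<le> max C 0 * l2norm v" by auto
  qed
  then show ?thesis by (intro that[of "max C 0"]) auto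
qed

lemma mat_apply_delta: "mat_apply T (delta a) = (\<lambda>y. T y a)"
proof
  fix y
  have "(\<lambda>x. T y x * delta a x) = (\<lambda>x. if x = a then T y a else 0)"
    by (auto simp: delta_def)
  then show "mat_apply T (delta a) y = T y a"
    unfolding mat_apply_def using infsum_if_eq(2)[of a UNIV "T y a"] by simp
qed

lemma mat_apply_restrict:
  assumes "finite F"
  shows "mat_apply S (\<lambda>x. if x \<in> F then v x else 0) y = (\<Sum>x\<in>F. S y x * v x)"
proof -
  have "(\<Sum>\<^sub>\<infinity>x. S y x * (if x \<in> F then v x else 0)) = (\<Sum>\<^sub>\<infinity>x\<in>F. S y x * v x)"
    by (rule infsum_cong_neutral) auto
  then show ?thesis unfolding mat_apply_def using assms by simp
qed

lemma mat_bound_column: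
  assumes "mat_bound T C" "C \<ge> 0"
  shows "is_l2 (\<lambda>y. T y a) \<and> l2norm (\<lambda>y. T y a) \<le> C"
proof -
  have "C * l2norm (delta a) \<le> C" using l2_delta[of a] assms(2) by (simp add: mult_left_le)
  then show ?thesis
    using mat_boundD(2,3)[OF assms(1), of "delta a"] l2_delta[of a] by (auto simp: mat_apply_delta)
qed

lemma l2_column: "bounded_mat T \<Longrightarrow> is_l2 (\<lambda>y. T y a)"
  by (metis bounded_matE mat_bound_column)

lemma l2norm_column_le_opnorm:
  fixes T :: "'b \<Rightarrow> 'a \<Rightarrow> complex"
  assumes "bounded_mat T"
  shows "l2norm (\<lambda>y. T y a) \<le> opnorm T"
proof -
  obtain C where C: "C \<ge> 0" "mat_bound T C" using assms by (rule bounded_matE)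
  have "bdd_above {l2norm (mat_apply T v) | v. is_l2 v \<and> l2norm v \<le> 1}"
  proof (rule bdd_aboveI, safe)
    fix v :: "'a \<Rightarrow> complex" assume "is_l2 v" "l2norm v \<le> 1"
    then show "l2norm (mat_apply T v) \<le> C"
      using mat_boundD(3)[OF C(2)] C(1) by (meson mult_left_le order_trans)
  qed
  moreover have "l2norm (mat_apply T (delta a)) \<in> {l2norm (mat_apply T v) | v. is_l2 v \<and> l2norm v \<le> 1}"
    using l2_delta[of a] by blast
  ultimately have "l2norm (mat_apply T (delta a)) \<le> opnorm T"
    unfolding opnorm_def by (intro cSup_upper)
  then show ?thesis by (simp add: mat_apply_delta)
qed

lemma norm_entry_le_opnorm: "bounded_mat T \<Longrightarrow> cmod (T y x) \<le> opnorm T"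
  using norm_le_l2norm[OF l2_column] l2norm_column_le_opnorm order_trans by fast

lemma bounded_mat_add:
  fixes A B :: "'b \<Rightarrow> 'a \<Rightarrow> complex"
  assumes "bounded_mat A" "bounded_mat B"
  shows "bounded_mat (\<lambda>y x. A y x + B y x)"
proof -
  obtain CA CB where A: "mat_bound A CA" and B: "mat_bound B CB"
    using assms bounded_mat_iff_mat_bound by blast
  have "mat_bound (\<lambda>y x. A y x + B y x) (CA + CB)" unfolding mat_bound_def
  proof (intro allI impI conjI)
    fix v :: "'a \<Rightarrow> complex" assume v: "is_l2 v"
    note sA = mat_boundD[OF A v] and sB = mat_boundD[OF B v]
    show "(\<lambda>x. (A y x + B y x) * v x) summable_on UNIV" for y
      using sA(1) sB(1) by (simp add: distrib_right summable_on_add)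
    have sum: "mat_apply (\<lambda>y x. A y x + B y x) v = (\<lambda>y. mat_apply A v y + mat_apply B v y)"
      unfolding mat_apply_def using sA(1) sB(1) by (simp add: distrib_right infsum_add)
    show "is_l2 (mat_apply (\<lambda>y x. A y x + B y x) v)"
      using l2_add[OF sA(2) sB(2)] sum by simp
    show "l2norm (mat_apply (\<lambda>y x. A y x + B y x) v) \<le> (CA + CB) * l2norm v"
      using l2_add[OF sA(2) sB(2)] sA(3) sB(3) sum by (simp add: distrib_right)
  qed
  then show ?thesis using bounded_mat_iff_mat_bound by blast
qed

lemma bounded_mat_scale:
  fixes A :: "'b \<Rightarrow> 'a \<Rightarrow> complex"
  assumes "bounded_mat A"
  shows "bounded_mat (\<lambda>y x. c * A y x)"
proof -
  obtain C where C: "C \<ge> 0" "mat_bound A C" using assms by (rule bounded_matE)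
  have "mat_bound (\<lambda>y x. c * A y x) (cmod c * C)" unfolding mat_bound_def
  proof (intro allI impI conjI)
    fix v :: "'a \<Rightarrow> complex" assume v: "is_l2 v"
    note sA = mat_boundD[OF C(2) v]
    show "(\<lambda>x. c * A y x * v x) summable_on UNIV" for y
      using summable_on_cmult_right[OF sA(1), of c] by (simp add: mult.assoc)
    have scaled: "mat_apply (\<lambda>y x. c * A y x) v = (\<lambda>y. c * mat_apply A v y)"
      unfolding mat_apply_def using sA(1) by (simp add: mult.assoc infsum_cmult_right)
    show "is_l2 (mat_apply (\<lambda>y x. c * A y x) v)"
      using l2_scale[OF sA(2)] scaled by simp
    have "l2norm (mat_apply (\<lambda>y x. c * A y x) v) \<le> cmod c * (C * l2norm v)"
      using l2_scale[OF sA(2), of c] sA(3) scaled by (metis mult_left_mono norm_ge_zero order_trans)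
    then show "l2norm (mat_apply (\<lambda>y x. c * A y x) v) \<le> cmod c * C * l2norm v"
      by (simp add: mult.assoc)
  qed
  then show ?thesis using bounded_mat_iff_mat_bound by blast
qed

lemma bounded_mat_diff:
  assumes "bounded_mat A" "bounded_mat B"
  shows "bounded_mat (mat_diff A B)"
proof -
  have "bounded_mat (\<lambda>y x. A y x + (-1) * B y x)"
    by (intro bounded_mat_add bounded_mat_scale assms)
  then show ?thesis unfolding mat_diff_def by simp
qed

lemma bounded_mat_lincomb:
  fixes n :: nat
  assumes "\<And>i. i < n \<Longrightarrow> bounded_mat (A i)"
  shows "bounded_mat (\<lambda>y x. \<Sum>i<n. c i * A i y x)"
  using assms
proof (induction n)
  case 0
  have "mat_bound (\<lambda>y x. 0) 0"
    unfolding mat_bound_def mat_apply_def by (simp add: is_l2_def l2norm_def)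
  then show ?case using bounded_mat_iff_mat_bound by auto
next
  case (Suc n)
  have "bounded_mat (\<lambda>y x. (\<Sum>i<n. c i * A i y x) + c n * A n y x)"
    using Suc by (intro bounded_mat_add bounded_mat_scale) auto
  then show ?case by simp
qed

text \<open>\<open>opnorm\<close> is a supremum and carries information only for bounded matrices, so the
  elements \<open>T\<^sup>* S\<close> of the inner span must be shown bounded; this needs the adjoint.\<close>

definition adj_apply :: "('b \<Rightarrow> 'a \<Rightarrow> complex) \<Rightarrow> ('b \<Rightarrow> complex) \<Rightarrow> ('a \<Rightarrow> complex)" where
  "adj_apply S w = (\<lambda>x. \<Sum>\<^sub>\<infinity>y. cnj (S y x) * w y)"

lemma adj_apply_summable:
  assumes "bounded_mat S" "is_l2 w"
  shows "(\<lambda>y. cnj (S y x) * w y) summable_on UNIV"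
  using l2_inner_summable[OF _ assms(2)] l2_column[OF assms(1)] by simp

lemma mat_bound_adj_apply:
  fixes S :: "'b \<Rightarrow> 'a \<Rightarrow> complex"
  assumes S: "mat_bound S C" "C \<ge> 0" and w: "is_l2 w"
  shows "is_l2 (adj_apply S w) \<and> l2norm (adj_apply S w) \<le> C * l2norm w"
proof (rule is_l2_l2normI)
  fix F :: "'a set" assume F: "finite F"
  have bS: "bounded_mat S" using S(1) bounded_mat_iff_mat_bound by blast
  define u where "u = adj_apply S w"
  define uF where "uF = (\<lambda>x. if x \<in> F then u x else 0)"
  define N where "N = L2_set (\<lambda>x. cmod (u x)) F"
  have uF: "is_l2 uF" "l2norm uF \<le> N"
    unfolding uF_def N_def using l2_restrict_finite[OF F, of u] by auto
  txt \<open>\<open>N\<^sup>2 = \<langle>uF, S\<^sup>* w\<rangle> = \<langle>S uF, w\<rangle> \<le> C N \<parallel>w\<parallel>\<close>\<close>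
  have "complex_of_real (N\<^sup>2) = (\<Sum>x\<in>F. cnj (u x) * u x)"
    unfolding N_def L2_set_def by (simp add: sum_nonneg complex_norm_square mult.commute flip: of_real_power)
  also have "\<dots> = (\<Sum>x\<in>F. \<Sum>\<^sub>\<infinity>y. cnj (u x) * (cnj (S y x) * w y))"
    by (intro sum.cong refl)
      (simp add: u_def adj_apply_def infsum_cmult_right adj_apply_summable[OF bS w])
  also have "\<dots> = (\<Sum>\<^sub>\<infinity>y. \<Sum>x\<in>F. cnj (u x) * (cnj (S y x) * w y))"
    using infsum_finite_sum[OF F, of "\<lambda>x y. cnj (u x) * (cnj (S y x) * w y)" UNIV]
      adj_apply_summable[OF bS w] by (simp add: summable_on_cmult_right)
  also have "\<dots> = (\<Sum>\<^sub>\<infinity>y. w y * cnj (mat_apply S uF y))"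
    by (intro infsum_cong) (simp add: uF_def mat_apply_restrict[OF F] sum_distrib_left mult_ac)
  finally have N2: "complex_of_real (N\<^sup>2) = (\<Sum>\<^sub>\<infinity>y. w y * cnj (mat_apply S uF y))" .
  have SuF: "is_l2 (mat_apply S uF)" "l2norm (mat_apply S uF) \<le> C * l2norm uF"
    using mat_boundD[OF S(1) uF(1)] by auto
  have "N * N = cmod (complex_of_real (N\<^sup>2))" by (simp only: norm_of_real) (simp add: power2_eq_square)
  also have "\<dots> \<le> l2norm w * l2norm (mat_apply S uF)"
    unfolding N2 using norm_l2_inner_le[OF w, of "\<lambda>y. cnj (mat_apply S uF y)"] SuF(1) by simp
  also have "\<dots> \<le> l2norm w * (C * N)"
    using SuF(2) uF(2) S(2) l2norm_nonneg[of w]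
    by (meson mult_left_mono order_trans)
  finally have "N * N \<le> (C * l2norm w) * N" by (simp add: mult_ac)
  moreover have "N \<ge> 0" "0 \<le> C * l2norm w" using S(2) by (auto simp: N_def l2norm_nonneg)
  ultimately have "N \<le> C * l2norm w"
    by (cases "N = 0") (auto intro: mult_right_le_imp_le)
  then show "L2_set (\<lambda>x. cmod (adj_apply S w x)) F \<le> C * l2norm w" unfolding N_def u_def .
qed

lemma inner_adj_apply_restrict:
  fixes S :: "'b \<Rightarrow> 'a \<Rightarrow> complex" and v :: "'a \<Rightarrow> complex"
  assumes S: "bounded_mat S" and w: "is_l2 w" and F: "finite F"
  defines "vF \<equiv> \<lambda>x. if x \<in> F then v x else 0"
  shows "(\<Sum>\<^sub>\<infinity>x. cnj (adj_apply S w x) * vF x) = (\<Sum>\<^sub>\<infinity>y. cnj (w y) * mat_apply S vF y)"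
proof -
  have summable: "(\<lambda>y. S y x * cnj (w y)) summable_on UNIV" for x
    using adj_apply_summable[OF S w, of x] summable_on_cnj_iff by fastforce
  have "(\<Sum>\<^sub>\<infinity>y. cnj (w y) * mat_apply S vF y) = (\<Sum>\<^sub>\<infinity>y. \<Sum>x\<in>F. S y x * cnj (w y) * v x)"
    unfolding vF_def by (simp add: mat_apply_restrict[OF F] sum_distrib_left mult_ac)
  also have "\<dots> = (\<Sum>x\<in>F. \<Sum>\<^sub>\<infinity>y. S y x * cnj (w y) * v x)"
    using infsum_finite_sum[OF F, of "\<lambda>x y. S y x * cnj (w y) * v x" UNIV] summable
    by (simp add: summable_on_cmult_left)
  also have "\<dots> = (\<Sum>x\<in>F. cnj (adj_apply S w x) * v x)"
    by (intro sum.cong refl)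
      (simp add: adj_apply_def infsum_cmult_left summable flip: infsum_cnj)
  also have "\<dots> = (\<Sum>\<^sub>\<infinity>x. cnj (adj_apply S w x) * vF x)"
    unfolding vF_def using F by (subst infsum_cong_neutral[where T = F]) auto
  finally show ?thesis ..
qed

lemma inner_adj_apply:
  fixes S :: "'b \<Rightarrow> 'a \<Rightarrow> complex"
  assumes S: "bounded_mat S" and w: "is_l2 w" and v: "is_l2 v"
  shows "(\<Sum>\<^sub>\<infinity>x. cnj (adj_apply S w x) * v x) = (\<Sum>\<^sub>\<infinity>y. cnj (w y) * mat_apply S v y)"
proof -
  obtain C where C: "C \<ge> 0" "mat_bound S C" using S by (rule bounded_matE)
  define u where "u = adj_apply S w"
  have u: "is_l2 (\<lambda>x. cnj (u x))"
    using mat_bound_adj_apply[OF C(2,1) w] unfolding u_def by simp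
  have cw: "is_l2 (\<lambda>y. cnj (w y))" using w by simp
  define L where "L a = (\<Sum>\<^sub>\<infinity>x. cnj (u x) * a x)" for a
  define R where "R a = (\<Sum>\<^sub>\<infinity>y. cnj (w y) * mat_apply S a y)" for a
  have add: "mat_apply S (\<lambda>x. a x + b x) = (\<lambda>y. mat_apply S a y + mat_apply S b y)"
    if "is_l2 a" "is_l2 b" for a b
    unfolding mat_apply_def using mat_boundD(1)[OF C(2) that(1)] mat_boundD(1)[OF C(2) that(2)]
    by (simp add: distrib_left infsum_add)
  have "L v - R v = 0"
  proof (rule l2_functional_eq_zero[where \<Phi> = "\<lambda>a. L a - R a" and K = "l2norm (\<lambda>x. cnj (u x)) + l2norm w * C"])
    fix a b :: "'a \<Rightarrow> complex" assume ab: "is_l2 a" "is_l2 b"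
    note Sa = mat_boundD(2)[OF C(2) ab(1)] and Sb = mat_boundD(2)[OF C(2) ab(2)]
    have "L (\<lambda>x. a x + b x) = L a + L b"
      unfolding L_def using l2_inner_summable[OF u ab(1)] l2_inner_summable[OF u ab(2)]
      by (simp add: distrib_left infsum_add)
    moreover have "R (\<lambda>x. a x + b x) = R a + R b"
      unfolding R_def add[OF ab] using l2_inner_summable[OF cw Sa] l2_inner_summable[OF cw Sb]
      by (simp add: distrib_left infsum_add)
    ultimately show "L (\<lambda>x. a x + b x) - R (\<lambda>x. a x + b x) = (L a - R a) + (L b - R b)"
      by simp
  next
    fix a :: "'a \<Rightarrow> complex" assume a: "is_l2 a"
    note Sa = mat_boundD(2,3)[OF C(2) a]
    have "cmod (R a) \<le> l2norm w * (C * l2norm a)"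
      unfolding R_def using norm_l2_inner_le[OF cw Sa(1)] Sa(2)
      by (metis l2_cnj(2) l2norm_nonneg mult_left_mono order_trans)
    moreover have "cmod (L a) \<le> l2norm (\<lambda>x. cnj (u x)) * l2norm a"
      unfolding L_def by (rule norm_l2_inner_le[OF u a])
    ultimately show "cmod (L a - R a) \<le> (l2norm (\<lambda>x. cnj (u x)) + l2norm w * C) * l2norm a"
      using norm_triangle_ineq4[of "L a" "R a"] by (simp add: algebra_simps)
  next
    fix F :: "'a set" assume "finite F"
    then show "L (\<lambda>x. if x \<in> F then v x else 0) - R (\<lambda>x. if x \<in> F then v x else 0) = 0"
      unfolding L_def R_def u_def using inner_adj_apply_restrict[OF S w] by simp
  qed (rule v)
  then show ?thesis unfolding L_def R_def u_def by simp
qed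

lemma bounded_mat_adj_comp:
  fixes T S :: "'b \<Rightarrow> 'a \<Rightarrow> complex"
  assumes T: "bounded_mat T" and S: "bounded_mat S"
  shows "bounded_mat (adj_comp T S)"
proof -
  obtain CT where CT: "CT \<ge> 0" "mat_bound T CT" using T by (rule bounded_matE)
  obtain CS where CS: "CS \<ge> 0" "mat_bound S CS" using S by (rule bounded_matE)
  have entry: "adj_comp T S x' x = cnj (adj_apply S (\<lambda>y. T y x') x)" for x' x
    unfolding adj_comp_def adj_apply_def infsum_cnj[symmetric] by (simp add: mult.commute)
  have "mat_bound (adj_comp T S) (CT * CS)" unfolding mat_bound_def
  proof (intro allI impI conjI)
    fix v :: "'a \<Rightarrow> complex" and x' :: 'a assume v: "is_l2 v"
    have "is_l2 (\<lambda>x. cnj (adj_apply S (\<lambda>y. T y x') x))"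
      using mat_bound_adj_apply[OF CS(2,1) l2_column[OF T]] by simp
    then show "(\<lambda>x. adj_comp T S x' x * v x) summable_on UNIV"
      unfolding entry using l2_inner_summable v by blast
  next
    fix v :: "'a \<Rightarrow> complex" assume v: "is_l2 v"
    note Sv = mat_boundD(2,3)[OF CS(2) v]
    have composition: "mat_apply (adj_comp T S) v = adj_apply T (mat_apply S v)"
    proof
      fix x'
      have "mat_apply (adj_comp T S) v x' = (\<Sum>\<^sub>\<infinity>x. cnj (adj_apply S (\<lambda>y. T y x') x) * v x)"
        unfolding mat_apply_def entry ..
      also have "\<dots> = (\<Sum>\<^sub>\<infinity>y. cnj (T y x') * mat_apply S v y)"
        by (rule inner_adj_apply[OF S l2_column[OF T] v])
      finally show "mat_apply (adj_comp T S) v x' = adj_apply T (mat_apply S v) x'"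
        unfolding adj_apply_def .
    qed
    have TSv: "is_l2 (adj_apply T (mat_apply S v))"
      "l2norm (adj_apply T (mat_apply S v)) \<le> CT * l2norm (mat_apply S v)"
      using mat_bound_adj_apply[OF CT(2,1) Sv(1)] by auto
    show "is_l2 (mat_apply (adj_comp T S) v)" using TSv(1) composition by simp
    have "CT * l2norm (mat_apply S v) \<le> CT * (CS * l2norm v)"
      using Sv(2) CT(1) by (rule mult_left_mono)
    then show "l2norm (mat_apply (adj_comp T S) v) \<le> CT * CS * l2norm v"
      using TSv(2) composition by (simp add: mult.assoc)
  qed
  then show ?thesis using bounded_mat_iff_mat_bound by blast
qed

lemma norm_adj_comp_le:
  assumes "bounded_mat T" "bounded_mat S"
  shows "cmod (adj_comp T S x' x) \<le> l2norm (\<lambda>y. T y x') * l2norm (\<lambda>y. S y x)"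
  unfolding adj_comp_def
  using norm_l2_inner_le[of "\<lambda>y. cnj (T y x')" "\<lambda>y. S y x"] assms by (simp add: l2_column)

definition idm :: "'a \<Rightarrow> 'a \<Rightarrow> complex" where
  "idm = (\<lambda>y x. if y = x then 1 else 0)"

lemma mat_apply_idm: "mat_apply idm v = v"
proof
  fix y
  have "(\<lambda>x. idm y x * v x) = (\<lambda>x. if x = y then v y else 0)" by (auto simp: idm_def)
  then show "mat_apply idm v y = v y"
    unfolding mat_apply_def using infsum_if_eq(2)[of y UNIV "v y"] by simp
qed

lemma bounded_mat_idm: "bounded_mat idm"
  unfolding bounded_mat_def
proof (intro exI[of _ 1] allI impI conjI)
  fix v :: "'a \<Rightarrow> complex" and y :: 'a
  have "(\<lambda>x. idm y x * v x) = (\<lambda>x. if x = y then v y else 0)" by (auto simp: idm_def)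
  then show "(\<lambda>x. idm y x * v x) summable_on UNIV" using infsum_if_eq(1) by metis
qed (auto simp: mat_apply_idm)

lemma opnorm_zero: "opnorm (\<lambda>(y::'b) (x::'a). 0::complex) = 0"
proof -
  have "{l2norm (mat_apply (\<lambda>(y::'b) (x::'a). 0::complex) v) | v. is_l2 v \<and> l2norm v \<le> 1} = {0}"
    by (auto simp: mat_apply_def l2norm_def is_l2_def intro!: exI[of _ "\<lambda>_::'a. 0::complex"])
  then show ?thesis unfolding opnorm_def by simp
qed

lemma idm_in_uniform_roe:
  assumes "is_metric dX"
  shows "idm \<in> uniform_roe dX"
  unfolding uniform_roe_def roe_closure_def
proof (safe intro!: bounded_mat_idm)
  fix e :: real assume e: "0 < e"
  have "finite_prop dX idm" unfolding finite_prop_def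
  proof (intro exI[of _ 1] allI impI)
    fix x y assume "1 \<le> dX x y"
    moreover have "dX y y = 0" using assms unfolding is_metric_def by auto
    ultimately show "idm y x = 0" by (auto simp: idm_def)
  qed
  moreover have "opnorm (mat_diff (idm :: 'a \<Rightarrow> 'a \<Rightarrow> complex) idm) = 0"
    using opnorm_zero by (simp add: mat_diff_def)
  ultimately show "\<exists>S. bounded_mat S \<and> finite_prop dX S \<and> opnorm (mat_diff idm S) < e"
    using e bounded_mat_idm by auto
qed

lemma roe_closure_column_small:
  fixes T :: "'b \<Rightarrow> 'a \<Rightarrow> complex"
  assumes "T \<in> roe_closure \<rho>" "e > 0"
  obtains R where "\<And>x. (\<forall>y. R \<le> \<rho> x y) \<Longrightarrow> l2norm (\<lambda>y. T y x) < e"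
proof -
  obtain S where T: "bounded_mat T" and S: "bounded_mat S" "finite_prop \<rho> S"
    and close: "opnorm (mat_diff T S) < e"
    using assms unfolding roe_closure_def by blast
  obtain R where R: "\<And>x y. R \<le> \<rho> x y \<Longrightarrow> S y x = 0"
    using S(2) unfolding finite_prop_def by blast
  show ?thesis
  proof (rule that)
    fix x assume "\<forall>y. R \<le> \<rho> x y"
    then have "(\<lambda>y. T y x) = (\<lambda>y. mat_diff T S y x)" by (simp add: mat_diff_def R)
    then show "l2norm (\<lambda>y. T y x) < e"
      using l2norm_column_le_opnorm[OF bounded_mat_diff[OF T S(1)]] close by (metis le_less_trans)
  qed
qed

lemma bounded_mat_inner_span:
  assumes "B \<in> inner_span (roe_closure \<rho>)"
  shows "bounded_mat B"
  using assms unfolding inner_span_def roe_closure_def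
  by (auto intro!: bounded_mat_lincomb bounded_mat_adj_comp)

lemma inner_span_diagonal_small:
  fixes \<rho> :: "'a \<Rightarrow> 'b \<Rightarrow> real"
  assumes "B \<in> inner_span (roe_closure \<rho>)" "e > 0"
  obtains R where "\<And>x. (\<forall>y. R \<le> \<rho> x y) \<Longrightarrow> cmod (B x x) < e"
proof -
  obtain n :: nat and c T S where TS: "\<forall>i<n. T i \<in> roe_closure \<rho> \<and> S i \<in> roe_closure \<rho>"
    and B: "B = (\<lambda>x' x. \<Sum>i<n. c i * adj_comp (T i) (S i) x' x)"
    using assms(1) unfolding inner_span_def by blast
  define sc where "sc = (\<Sum>i<n. cmod (c i))"
  have sc: "sc \<ge> 0" unfolding sc_def by (simp add: sum_nonneg)
  define \<epsilon> where "\<epsilon> = sqrt (e / (sc + 1))"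
  have \<epsilon>: "\<epsilon> > 0" "\<epsilon> * \<epsilon> = e / (sc + 1)" using assms(2) sc by (auto simp: \<epsilon>_def)
  have "\<exists>r. \<forall>x. (\<forall>y. r \<le> \<rho> x y) \<longrightarrow> l2norm (\<lambda>y. T i y x) < \<epsilon> \<and> l2norm (\<lambda>y. S i y x) < \<epsilon>"
    if "i < n" for i
  proof -
    have "T i \<in> roe_closure \<rho>" "S i \<in> roe_closure \<rho>" using TS that by auto
    obtain r1 where "\<And>x. \<forall>y. r1 \<le> \<rho> x y \<Longrightarrow> l2norm (\<lambda>y. T i y x) < \<epsilon>"
      using roe_closure_column_small[OF \<open>T i \<in> roe_closure \<rho>\<close> \<epsilon>(1)] by blast
    moreover obtain r2 where "\<And>x. \<forall>y. r2 \<le> \<rho> x y \<Longrightarrow> l2norm (\<lambda>y. S i y x) < \<epsilon>"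
      using roe_closure_column_small[OF \<open>S i \<in> roe_closure \<rho>\<close> \<epsilon>(1)] by blast
    ultimately show ?thesis by (intro exI[of _ "max r1 r2"]) auto
  qed
  then obtain r where r: "\<And>i x. i < n \<Longrightarrow> \<forall>y. r i \<le> \<rho> x y \<Longrightarrow>
      l2norm (\<lambda>y. T i y x) < \<epsilon> \<and> l2norm (\<lambda>y. S i y x) < \<epsilon>"
    by (metis (mono_tags))
  show ?thesis
  proof (rule that[of "Max (insert 0 (r ` {..<n}))"])
    fix x assume far: "\<forall>y. Max (insert 0 (r ` {..<n})) \<le> \<rho> x y"
    have entry: "cmod (adj_comp (T i) (S i) x x) \<le> \<epsilon> * \<epsilon>" if i: "i < n" for i
    proof -
      have "r i \<le> Max (insert 0 (r ` {..<n}))" using i by (intro Max_ge) auto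
      then have small: "l2norm (\<lambda>y. T i y x) < \<epsilon>" "l2norm (\<lambda>y. S i y x) < \<epsilon>"
        using r[OF i] far order_trans by blast+
      have "bounded_mat (T i)" "bounded_mat (S i)" using TS i unfolding roe_closure_def by auto
      then have "cmod (adj_comp (T i) (S i) x x) \<le> l2norm (\<lambda>y. T i y x) * l2norm (\<lambda>y. S i y x)"
        by (rule norm_adj_comp_le)
      also have "\<dots> \<le> \<epsilon> * \<epsilon>" using small \<epsilon>(1) by (intro mult_mono) (auto simp: l2norm_nonneg)
      finally show ?thesis .
    qed
    have "cmod (B x x) \<le> (\<Sum>i<n. cmod (c i) * cmod (adj_comp (T i) (S i) x x))"
      unfolding B using norm_sum[of "\<lambda>i. c i * adj_comp (T i) (S i) x x"] by (simp add: norm_mult)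
    also have "\<dots> \<le> (\<Sum>i<n. cmod (c i) * (\<epsilon> * \<epsilon>))"
      by (intro sum_mono mult_left_mono entry) auto
    also have "\<dots> = sc * (e / (sc + 1))" unfolding sc_def \<epsilon>(2) by (rule sum_distrib_right[symmetric])
    also have "\<dots> < e" using sc assms(2) by (simp add: field_simps)
    finally show "cmod (B x x) < e" .
  qed
qed

theorem mainTheorem3:
  fixes dX :: "'a::countable \<Rightarrow> 'a \<Rightarrow> real"
    and dY :: "'b::countable \<Rightarrow> 'b \<Rightarrow> real"
    and d :: "('a + 'b) \<Rightarrow> ('a + 'b) \<Rightarrow> real"
  assumes "is_discrete_metric dX" and "is_discrete_metric dY"
    and "d \<in> coarse_metrics dX dY"
    and "full_module dX (M_d d)"
  shows "\<exists>L>0. \<exists>f :: 'a \<Rightarrow> 'b. \<forall>x. d (Inl x) (Inr (f x)) \<le> L"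
proof -
  define \<rho> where "\<rho> = (\<lambda>x y. d (Inl x) (Inr y))"
  have "idm \<in> uniform_roe dX"
    using assms(1) idm_in_uniform_roe unfolding is_discrete_metric_def by blast
  moreover have "\<forall>A\<in>uniform_roe dX. \<forall>e>0. \<exists>B\<in>inner_span (roe_closure \<rho>). opnorm (mat_diff A B) < e"
    using assms(4) unfolding full_module_def M_d_def \<rho>_def .
  ultimately obtain B where B: "B \<in> inner_span (roe_closure \<rho>)" "opnorm (mat_diff idm B) < 1/2"
    by (meson half_gt_zero zero_less_one)
  have diagonal_large: "cmod (B x x) > 1/2" for x
  proof -
    have "cmod (1 - B x x) \<le> opnorm (mat_diff idm B)"
      using norm_entry_le_opnorm[OF bounded_mat_diff[OF bounded_mat_idm bounded_mat_inner_span[OF B(1)]]]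
      by (metis idm_def mat_diff_def)
    then show ?thesis using B(2) norm_triangle_ineq[of "1 - B x x" "B x x"] by simp
  qed
  obtain R where "\<And>x. (\<forall>y. R \<le> \<rho> x y) \<Longrightarrow> cmod (B x x) < 1/2"
    using inner_span_diagonal_small[OF B(1)] by (metis half_gt_zero zero_less_one)
  then have "\<forall>x. \<exists>y. \<rho> x y \<le> R" using diagonal_large by (meson less_asym' not_le_imp_less)
  then obtain f where "\<forall>x. \<rho> x (f x) \<le> R" by metis
  then have "\<forall>x. d (Inl x) (Inr (f x)) \<le> max R 1" unfolding \<rho>_def by (meson max.coboundedI1)
  then show ?thesis by (intro exI[of _ "max R 1"]) auto
qed

end
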